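(* For every protocol $\Pi$ for the game $G_n$ there exists an order oblivious protocol $\Pi'$ for $G_n$ such that $E(\Pi')\subseteq E(\Pi)$. In particular (with Bob using his optimal output rule in $\Pi'$), $c(\Pi')\le c(\Pi)$.
   Context: The game $G_n$ ($n$ a positive integer): Alice receives, as a stream, a permutation $\sigma=(\sigma_1,\dots,\sigma_n)$ of $[n]=\{1,\dots,n\}$ followed by a bit $b\in\{0,1\}$. She has an array $\mathbf{v}=(v_1,\dots,v_n)$ whose cells are initially empty (denoted $*$). For each $i<n$, upon receiving $\sigma_i$ she writes a bit in cell $\sigma_i$; this bit may depend on everything she has received so far ($\sigma_1,\dots,\sigma_i$), and once written cannot be changed. Upon receiving $\sigma_n$ and $b$ she writes $b$ in cell $\sigma_n$. Bob receives the completed array $\mathbf{v}\in\{0,1\}^n$ and outputs a set $J\subseteq[n]$ as a function of $\mathbf{v}$. A protocol (Alice's writing rule together with Bob's output map) is valid if $\sigma_n\in J$ for all $\sigma,b$; its cost $c(\Pi)$ is the maximum of $|J|$ over all $\sigma,b$. All protocols are assumed valid. For a protocol $\Pi$ and permutation $\sigma$, $\Pi_A(\sigma)\in\{0,1,*\}^n$ denotes the array after Alice has processed $\sigma_1,\dots,\sigma_{n-1}$ (so only cell $\sigma_n$ is $*$); it is identified with the edge of the Hamming cube $\{0,1\}^n$ joining its two completions. $E(\Pi)$ is the set of edges $\Pi_A(\sigma)$ over all permutations $\sigma$. A protocol is order oblivious if the bit Alice writes in cell $\sigma_i$ depends only on $\sigma_i$ and on the current partial assignment of $\mathbf{v}$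 (which cells are filled and with which bits), and not on the order in which $\sigma_1,\dots,\sigma_{i-1}$ arrived. *)

theory Defs
  imports Main
begin

text \<open>Cells are indexed by 0..<n (standing for [n]). Alice's rule is a function of the
  prefix received so far (ending with the cell currently being written); Bob's rule maps
  the completed array (a partial map with domain {0..<n}) to a set J.\<close>

definition perms :: "nat \<Rightarrow> nat list set" where
  "perms n = {\<sigma>. distinct \<sigma> \<and> set \<sigma> = {0..<n}}"

type_synonym alice = "nat list \<Rightarrow> bool"
type_synonym arr = "nat \<Rightarrow> bool option"
type_synonym bob = "arr \<Rightarrow> nat set"

fun fill :: "alice \<Rightarrow> nat list \<Rightarrow> nat list \<Rightarrow> arr" where
  "fill A pre [] = Map.empty"
| "fill A pre (x # xs) = (fill A (pre @ [x]) xs)(x \<mapsto> A (pre @ [x]))"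

definition partial :: "alice \<Rightarrow> nat list \<Rightarrow> arr" where
  "partial A xs = fill A [] xs"

text \<open>Pi_A(sigma): array after sigma_1..sigma_{n-1}, cell sigma_n empty (an edge).\<close>
definition PiA :: "alice \<Rightarrow> nat list \<Rightarrow> arr" where
  "PiA A \<sigma> = partial A (butlast \<sigma>)"

definition completed :: "alice \<Rightarrow> nat list \<Rightarrow> bool \<Rightarrow> arr" where
  "completed A \<sigma> b = (PiA A \<sigma>)(last \<sigma> \<mapsto> b)"

definition valid_protocol :: "nat \<Rightarrow> alice \<Rightarrow> bob \<Rightarrow> bool" where
  "valid_protocol n A B \<longleftrightarrow>
     (\<forall>\<sigma>\<in>perms n. \<forall>b. B (completed A \<sigma> b) \<subseteq> {0..<n} \<and> last \<sigma> \<in> B (completed A \<sigma> b))"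

definition cost :: "nat \<Rightarrow> alice \<Rightarrow> bob \<Rightarrow> nat" where
  "cost n A B = Max {card (B (completed A \<sigma> b)) | \<sigma> b. \<sigma> \<in> perms n}"

definition edges :: "nat \<Rightarrow> alice \<Rightarrow> arr set" where
  "edges n A = {PiA A \<sigma> | \<sigma>. \<sigma> \<in> perms n}"

definition order_oblivious :: "nat \<Rightarrow> alice \<Rightarrow> bool" where
  "order_oblivious n A \<longleftrightarrow>
     (\<exists>g :: arr \<Rightarrow> nat \<Rightarrow> bool. \<forall>xs x.
        distinct (xs @ [x]) \<and> set (xs @ [x]) \<subseteq> {0..<n} \<and> length (xs @ [x]) < n
        \<longrightarrow> A (xs @ [x]) = g (partial A xs) x)"

end

theory Submission
  imports Defs
begin

text \<open>Alice' replaces the prefix she has actually received by a fixed canonical ordering of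
  the cells filled so far, chosen among the orderings that make Alice produce the current
  partial array; by induction her partial array after any prefix is one that Alice herself
  produces after a reordering of that prefix. Hence every edge of Alice' is an edge of Alice
  with the same empty cell, so Bob's rule stays valid and the cost cannot increase, while
  Alice' only looks at the current partial array and the incoming cell.\<close>

lemma fill_snoc:
  "x \<notin> set xs \<Longrightarrow> fill A pre (xs @ [x]) = (fill A pre xs)(x \<mapsto> A (pre @ xs @ [x]))"
proof (induction xs arbitrary: pre)
  case Nil
  then show ?case by simp
next
  case (Cons y xs)
  then show ?case by (auto simp add: fun_eq_iff)
qed

lemma partial_snoc:
  "x \<notin> set xs \<Longrightarrow> partial A (xs @ [x]) = (partial A xs)(x \<mapsto> A (xs @ [x]))"
  unfolding partial_def by (simp add: fill_snoc)

lemma dom_partial: "dom (partial A xs) = set xs"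
proof -
  have "dom (fill A pre xs) = set xs" for pre
    by (induction xs arbitrary: pre) auto
  then show ?thesis
    unfolding partial_def .
qed

definition canonical_prefix :: "alice \<Rightarrow> arr \<Rightarrow> nat list" where
  "canonical_prefix A p = (SOME xs. distinct xs \<and> partial A xs = p)"

lemma canonical_prefix:
  assumes "distinct xs"
  shows "distinct (canonical_prefix A (partial A xs))"
    and "partial A (canonical_prefix A (partial A xs)) = partial A xs"
    and "set (canonical_prefix A (partial A xs)) = set xs"
proof -
  have "distinct (canonical_prefix A (partial A xs))
      \<and> partial A (canonical_prefix A (partial A xs)) = partial A xs"
    unfolding canonical_prefix_def by (rule someI[where x = xs]) (use assms in simp)
  then show "distinct (canonical_prefix A (partial A xs))"
    and eq: "partial A (canonical_prefix A (partial A xs)) = partial A xs"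
    by auto
  show "set (canonical_prefix A (partial A xs)) = set xs"
    using arg_cong[OF eq, of dom] by (simp add: dom_partial)
qed

definition replay :: "alice \<Rightarrow> nat list \<Rightarrow> nat list" where
  "replay A = foldl (\<lambda>ys x. canonical_prefix A (partial A ys) @ [x]) []"

lemma replay_Nil [simp]: "replay A [] = []"
  by (simp add: replay_def)

lemma replay_snoc [simp]:
  "replay A (xs @ [x]) = canonical_prefix A (partial A (replay A xs)) @ [x]"
  by (simp add: replay_def)

definition oblivious_alice :: "alice \<Rightarrow> alice" where
  "oblivious_alice A xs = A (replay A xs)"

lemma replay_invariant:
  assumes "distinct xs"
  shows "distinct (replay A xs) \<and> set (replay A xs) = set xs
    \<and> partial (oblivious_alice A) xs = partial A (replay A xs)"
  using assms
proof (induction xs rule: rev_induct)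
  case Nil
  then show ?case by (simp add: partial_def)
next
  case (snoc x xs)
  let ?r = "replay A xs"
  let ?c = "canonical_prefix A (partial A ?r)"
  from snoc have IH: "distinct ?r" "set ?r = set xs" "partial (oblivious_alice A) xs = partial A ?r"
    and x_new: "x \<notin> set xs" by auto
  note c = canonical_prefix[OF IH(1), of A]
  have "partial (oblivious_alice A) (xs @ [x])
      = (partial (oblivious_alice A) xs)(x \<mapsto> oblivious_alice A (xs @ [x]))"
    using partial_snoc[OF x_new] .
  also have "\<dots> = (partial A ?c)(x \<mapsto> A (?c @ [x]))"
    using IH(3) c(2) by (simp add: oblivious_alice_def)
  also have "\<dots> = partial A (?c @ [x])"
    using partial_snoc[of x ?c A] c(3) IH(2) x_new by simp
  finally show ?case
    using c(1,3) IH(2) x_new by simp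
qed

lemma order_oblivious_oblivious_alice: "order_oblivious n (oblivious_alice A)"
  unfolding order_oblivious_def
proof (intro exI[where x = "\<lambda>p x. A (canonical_prefix A p @ [x])"] allI impI)
  fix xs x
  assume "distinct (xs @ [x]) \<and> set (xs @ [x]) \<subseteq> {0..<n} \<and> length (xs @ [x]) < n"
  then have "partial (oblivious_alice A) xs = partial A (replay A xs)"
    using replay_invariant[of xs A] by simp
  then show "oblivious_alice A (xs @ [x])
      = A (canonical_prefix A (partial (oblivious_alice A) xs) @ [x])"
    by (simp add: oblivious_alice_def)
qed

lemma PiA_oblivious_alice:
  assumes "distinct \<sigma>" "\<sigma> \<noteq> []"
  shows "\<exists>\<sigma>'. distinct \<sigma>' \<and> set \<sigma>' = set \<sigma> \<and> last \<sigma>' = last \<sigma>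
    \<and> PiA (oblivious_alice A) \<sigma> = PiA A \<sigma>'"
proof -
  let ?r = "replay A (butlast \<sigma>)"
  have \<sigma>: "\<sigma> = butlast \<sigma> @ [last \<sigma>]"
    using assms(2) by simp
  with assms(1) have "distinct (butlast \<sigma> @ [last \<sigma>])"
    by simp
  then have "distinct (butlast \<sigma>)" "last \<sigma> \<notin> set (butlast \<sigma>)"
    by auto
  moreover note replay_invariant[OF this(1), of A]
  ultimately show ?thesis
    by (intro exI[where x = "?r @ [last \<sigma>]"]) (subst (2 3) \<sigma>, simp add: PiA_def)
qed

lemma perms_not_Nil: "0 < n \<Longrightarrow> \<sigma> \<in> perms n \<Longrightarrow> \<sigma> \<noteq> []"
  by (auto simp add: perms_def)

lemma finite_perms: "finite (perms n)"
proof (rule finite_subset)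
  show "perms n \<subseteq> {xs. set xs \<subseteq> {0..<n} \<and> length xs \<le> n}"
    unfolding perms_def using distinct_card by fastforce
  show "finite {xs. set xs \<subseteq> {0..<n} \<and> length xs \<le> n}"
    by (rule finite_lists_length_le) simp
qed

lemma valid_protocol_if_edges_simulated:
  assumes "valid_protocol n A B"
    and "\<And>\<sigma>. \<sigma> \<in> perms n \<Longrightarrow> \<exists>\<sigma>'\<in>perms n. PiA A' \<sigma> = PiA A \<sigma>' \<and> last \<sigma>' = last \<sigma>"
  shows "valid_protocol n A' B"
  unfolding valid_protocol_def
proof (intro ballI allI)
  fix \<sigma> b
  assume "\<sigma> \<in> perms n"
  then obtain \<sigma>' where "\<sigma>' \<in> perms n" "completed A' \<sigma> b = completed A \<sigma>' b" "last \<sigma>' = last \<sigma>"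
    using assms(2) unfolding completed_def by metis
  then show "B (completed A' \<sigma> b) \<subseteq> {0..<n} \<and> last \<sigma> \<in> B (completed A' \<sigma> b)"
    using assms(1) unfolding valid_protocol_def by metis
qed

lemma cost_le_if_edges_simulated:
  assumes "\<And>\<sigma>. \<sigma> \<in> perms n \<Longrightarrow> \<exists>\<sigma>'\<in>perms n. PiA A' \<sigma> = PiA A \<sigma>' \<and> last \<sigma>' = last \<sigma>"
  shows "cost n A' B \<le> cost n A B"
  unfolding cost_def
proof (rule Max_mono)
  show "{card (B (completed A' \<sigma> b)) | \<sigma> b. \<sigma> \<in> perms n}
      \<subseteq> {card (B (completed A \<sigma> b)) | \<sigma> b. \<sigma> \<in> perms n}"
  proof
    fix k
    assume "k \<in> {card (B (completed A' \<sigma> b)) | \<sigma> b. \<sigma> \<in> perms n}"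
    then obtain \<sigma> b where "\<sigma> \<in> perms n" "k = card (B (completed A' \<sigma> b))"
      by blast
    with assms obtain \<sigma>' where "\<sigma>' \<in> perms n" "k = card (B (completed A \<sigma>' b))"
      unfolding completed_def by metis
    then show "k \<in> {card (B (completed A \<sigma> b)) | \<sigma> b. \<sigma> \<in> perms n}"
      by blast
  qed
  have "[0..<n] \<in> perms n"
    by (simp add: perms_def)
  then show "{card (B (completed A' \<sigma> b)) | \<sigma> b. \<sigma> \<in> perms n} \<noteq> {}"
    by blast
  have "{card (B (completed A \<sigma> b)) | \<sigma> b. \<sigma> \<in> perms n}
      = (\<lambda>(\<sigma>, b). card (B (completed A \<sigma> b))) ` (perms n \<times> UNIV)"
    by auto
  then show "finite {card (B (completed A \<sigma> b)) | \<sigma> b. \<sigma> \<in> perms n}"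
    using finite_perms by simp
qed

theorem proposition2:
  fixes n :: nat and A :: alice and B :: bob
  assumes "0 < n"
    and "valid_protocol n A B"
  shows "\<exists>A' B'. valid_protocol n A' B' \<and> order_oblivious n A'
           \<and> edges n A' \<subseteq> edges n A \<and> cost n A' B' \<le> cost n A B"
proof -
  have sim: "\<exists>\<sigma>'\<in>perms n. PiA (oblivious_alice A) \<sigma> = PiA A \<sigma>' \<and> last \<sigma>' = last \<sigma>"
    if "\<sigma> \<in> perms n" for \<sigma>
    using that PiA_oblivious_alice[of \<sigma> A] perms_not_Nil[OF assms(1) that]
    by (auto simp add: perms_def)
  then have "edges n (oblivious_alice A) \<subseteq> edges n A"
    unfolding edges_def by blast
  with sim show ?thesis
    using valid_protocol_if_edges_simulated[OF assms(2)] cost_le_if_edges_simulated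
      order_oblivious_oblivious_alice
    by blast
qed

end
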